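(* Let $S$ be an intra-regular $\Gamma$-AG$^{**}$-groupoid and $Q\subseteq S$ nonempty with $Q\Gamma Q\subseteq Q$. Then $Q$ is a $\Gamma$-quasi ideal of $S$ if and only if $S\Gamma Q\cap Q\Gamma S=Q$.
   Context: Let $S$ and $\Gamma$ be nonempty sets with a map $S\times\Gamma\times S\to S$, $(x,\gamma,y)\mapsto x\gamma y$. $S$ is a $\Gamma$-AG-groupoid if $(x\gamma y)\delta z=(z\gamma y)\delta x$ for all $x,y,z\in S$, $\gamma,\delta\in\Gamma$; it is a $\Gamma$-AG$^{**}$-groupoid if moreover $a\alpha(b\beta c)=b\alpha(a\beta c)$ for all $a,b,c\in S$, $\alpha,\beta\in\Gamma$. For subsets $A,B\subseteq S$, $A\Gamma B=\{a\gamma b: a\in A,\gamma\in\Gamma,b\in B\}$. $S$ is intra-regular if for every $a\in S$ there exist $x,y\in S$ and $\beta,\gamma,\delta\in\Gamma$ with $a=(x\beta(a\delta a))\gamma y$. A nonempty subset $Q$ with $Q\Gamma Q\subseteq Q$ is a $\Gamma$-quasi ideal if $S\Gamma Q\cap Q\Gamma S\subseteq Q$. *)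

theory Defs
  imports Main
begin

definition gamma_groupoid :: "'a set \<Rightarrow> 'g set \<Rightarrow> ('a \<Rightarrow> 'g \<Rightarrow> 'a \<Rightarrow> 'a) \<Rightarrow> bool" where
  "gamma_groupoid S G op \<longleftrightarrow> S \<noteq> {} \<and> G \<noteq> {} \<and>
     (\<forall>x\<in>S. \<forall>g\<in>G. \<forall>y\<in>S. op x g y \<in> S)"

definition gamma_AG_groupoid :: "'a set \<Rightarrow> 'g set \<Rightarrow> ('a \<Rightarrow> 'g \<Rightarrow> 'a \<Rightarrow> 'a) \<Rightarrow> bool" where
  "gamma_AG_groupoid S G op \<longleftrightarrow> gamma_groupoid S G op \<and>
     (\<forall>x\<in>S. \<forall>y\<in>S. \<forall>z\<in>S. \<forall>g\<in>G. \<forall>d\<in>G. op (op x g y) d z = op (op z g y) d x)"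

definition gamma_AG2_groupoid :: "'a set \<Rightarrow> 'g set \<Rightarrow> ('a \<Rightarrow> 'g \<Rightarrow> 'a \<Rightarrow> 'a) \<Rightarrow> bool" where
  "gamma_AG2_groupoid S G op \<longleftrightarrow> gamma_AG_groupoid S G op \<and>
     (\<forall>a\<in>S. \<forall>b\<in>S. \<forall>c\<in>S. \<forall>\<alpha>\<in>G. \<forall>\<beta>\<in>G. op a \<alpha> (op b \<beta> c) = op b \<alpha> (op a \<beta> c))"

definition gset_prod :: "('a \<Rightarrow> 'g \<Rightarrow> 'a \<Rightarrow> 'a) \<Rightarrow> 'a set \<Rightarrow> 'g set \<Rightarrow> 'a set \<Rightarrow> 'a set" where
  "gset_prod op A G B = {op a g b | a g b. a \<in> A \<and> g \<in> G \<and> b \<in> B}"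

definition intra_regular :: "'a set \<Rightarrow> 'g set \<Rightarrow> ('a \<Rightarrow> 'g \<Rightarrow> 'a \<Rightarrow> 'a) \<Rightarrow> bool" where
  "intra_regular S G op \<longleftrightarrow> (\<forall>a\<in>S. \<exists>x\<in>S. \<exists>y\<in>S. \<exists>\<beta>\<in>G. \<exists>\<gamma>\<in>G. \<exists>\<delta>\<in>G.
      a = op (op x \<beta> (op a \<delta> a)) \<gamma> y)"

definition gamma_quasi_ideal :: "'a set \<Rightarrow> 'g set \<Rightarrow> ('a \<Rightarrow> 'g \<Rightarrow> 'a \<Rightarrow> 'a) \<Rightarrow> 'a set \<Rightarrow> bool" where
  "gamma_quasi_ideal S G op Q \<longleftrightarrow> Q \<noteq> {} \<and> Q \<subseteq> S \<and> gset_prod op Q G Q \<subseteq> Q \<and>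
     gset_prod op S G Q \<inter> gset_prod op Q G S \<subseteq> Q"

end

theory Submission
  imports Defs
begin

text \<open>
  Every subset of S satisfies
  Q \<subseteq> S Gamma Q \<inter> Q Gamma S for free once it is closed under the ternary
  product, because every element a of S absorbs products on both sides:
    (1) a \<in> S Gamma {a}, and
    (2) a \<in> ({a} Gamma {a}) Gamma S.
  Both follow from the intra-regular representation a = (x\<beta>(a\<delta>a))\<gamma>y by
  rearranging with the left invertive law (x\<gamma>y)\<delta>z = (z\<gamma>y)\<delta>x and the
  AG** law a\<alpha>(b\<beta>c) = b\<alpha>(a\<beta>c). For (2) one also expands y itself by
  intra-regularity. Since the defining inclusion of a quasi ideal is the
  reverse one, the quasi ideals are exactly the sets with
  S Gamma Q \<inter> Q Gamma S = Q.
\<close>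

lemma gset_prod_mono:
  assumes "A \<subseteq> A'" and "B \<subseteq> B'"
  shows "gset_prod op A G B \<subseteq> gset_prod op A' G B'"
  using assms unfolding gset_prod_def by blast

lemma gset_prod_memI:
  assumes "a \<in> A" and "g \<in> G" and "b \<in> B"
  shows "op a g b \<in> gset_prod op A G B"
  using assms unfolding gset_prod_def by blast

locale gamma_AG2 =
  fixes S :: "'a set" and G :: "'g set" and op :: "'a \<Rightarrow> 'g \<Rightarrow> 'a \<Rightarrow> 'a"
  assumes AG2: "gamma_AG2_groupoid S G op"
begin

lemma closed: "x \<in> S \<Longrightarrow> g \<in> G \<Longrightarrow> y \<in> S \<Longrightarrow> op x g y \<in> S"
  using AG2 unfolding gamma_AG2_groupoid_def gamma_AG_groupoid_def gamma_groupoid_def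
  by blast

lemma left_invertive:
  "x \<in> S \<Longrightarrow> y \<in> S \<Longrightarrow> z \<in> S \<Longrightarrow> g \<in> G \<Longrightarrow> d \<in> G \<Longrightarrow>
    op (op x g y) d z = op (op z g y) d x"
  using AG2 unfolding gamma_AG2_groupoid_def gamma_AG_groupoid_def by blast

lemma left_permutable:
  "a \<in> S \<Longrightarrow> b \<in> S \<Longrightarrow> c \<in> S \<Longrightarrow> \<alpha> \<in> G \<Longrightarrow> \<beta> \<in> G \<Longrightarrow>
    op a \<alpha> (op b \<beta> c) = op b \<alpha> (op a \<beta> c)"
  using AG2 unfolding gamma_AG2_groupoid_def by blast

lemma absorb_left:
  assumes a: "a \<in> S" and x: "x \<in> S" and y: "y \<in> S"
    and \<beta>: "\<beta> \<in> G" and \<gamma>: "\<gamma> \<in> G" and \<delta>: "\<delta> \<in> G"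
    and rep: "a = op (op x \<beta> (op a \<delta> a)) \<gamma> y"
  shows "a \<in> gset_prod op S G {a}"
proof -
  have aa: "op a \<delta> a \<in> S" using closed a \<delta> by blast
  have ya: "op y \<delta> a \<in> S" using closed y \<delta> a by blast
  have "a = op (op y \<beta> (op a \<delta> a)) \<gamma> x"
    using rep left_invertive[OF x aa y \<beta> \<gamma>] by simp
  also have "op y \<beta> (op a \<delta> a) = op a \<beta> (op y \<delta> a)"
    using left_permutable[OF y a a \<beta> \<delta>] .
  also have "op (op a \<beta> (op y \<delta> a)) \<gamma> x = op (op x \<beta> (op y \<delta> a)) \<gamma> a"
    using left_invertive[OF a ya x \<beta> \<gamma>] .
  finally show ?thesis
    using gset_prod_memI closed[OF x \<beta> ya] \<gamma> by (metis singletonI)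
qed

lemma absorb_right:
  assumes a: "a \<in> S" and x: "x \<in> S"
    and \<beta>: "\<beta> \<in> G" and \<gamma>: "\<gamma> \<in> G" and \<delta>: "\<delta> \<in> G"
    and rep: "a = op (op x \<beta> (op a \<delta> a)) \<gamma> y"
    and v: "v \<in> S" and y': "y' \<in> S" and \<gamma>': "\<gamma>' \<in> G"
    and rep_y: "y = op v \<gamma>' y'"
  shows "a \<in> gset_prod op (gset_prod op {a} G {a}) G S"
proof -
  define w where "w = op a \<delta> a"
  have w: "w \<in> S" unfolding w_def using closed a \<delta> by blast
  have xv: "op x \<beta> v \<in> S" using closed x \<beta> v by blast
  have "a = op (op x \<beta> w) \<gamma> (op v \<gamma>' y')" using rep rep_y w_def by simp
  also have "\<dots> = op (op (op v \<gamma>' y') \<beta> w) \<gamma> x"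
    using left_invertive[OF x w closed[OF v \<gamma>' y'] \<beta> \<gamma>] .
  also have "op (op v \<gamma>' y') \<beta> w = op (op w \<gamma>' y') \<beta> v"
    using left_invertive[OF v y' w \<gamma>' \<beta>] .
  also have "op (op (op w \<gamma>' y') \<beta> v) \<gamma> x = op (op x \<beta> v) \<gamma> (op w \<gamma>' y')"
    using left_invertive[OF closed[OF w \<gamma>' y'] v x \<beta> \<gamma>] .
  also have "\<dots> = op w \<gamma> (op (op x \<beta> v) \<gamma>' y')"
    using left_permutable[OF xv w y' \<gamma> \<gamma>'] .
  finally have "a = op w \<gamma> (op (op x \<beta> v) \<gamma>' y')" .
  moreover have "w \<in> gset_prod op {a} G {a}"
    unfolding w_def using gset_prod_memI \<delta> by (metis singletonI)
  ultimately show ?thesis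
    using gset_prod_memI \<gamma> closed[OF xv \<gamma>' y'] by metis
qed

lemma intra_regular_subset_quasi_product:
  assumes IR: "intra_regular S G op"
    and Q: "Q \<subseteq> S" and QQ: "gset_prod op Q G Q \<subseteq> Q"
  shows "Q \<subseteq> gset_prod op S G Q \<inter> gset_prod op Q G S"
proof
  fix a assume aQ: "a \<in> Q"
  hence a: "a \<in> S" using Q by blast
  obtain x y \<beta> \<gamma> \<delta> where x: "x \<in> S" and y: "y \<in> S" and \<beta>: "\<beta> \<in> G" and \<gamma>: "\<gamma> \<in> G"
    and \<delta>: "\<delta> \<in> G" and rep: "a = op (op x \<beta> (op a \<delta> a)) \<gamma> y"
    using IR a unfolding intra_regular_def by blast
  obtain x' y' \<beta>' \<gamma>' \<delta>' where x': "x' \<in> S" and y': "y' \<in> S" and \<beta>': "\<beta>' \<in> G"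
    and \<gamma>': "\<gamma>' \<in> G" and \<delta>': "\<delta>' \<in> G" and rep_y: "y = op (op x' \<beta>' (op y \<delta>' y)) \<gamma>' y'"
    using IR y unfolding intra_regular_def by blast
  have v: "op x' \<beta>' (op y \<delta>' y) \<in> S" using closed x' \<beta>' \<delta>' y by blast
  have "gset_prod op S G {a} \<subseteq> gset_prod op S G Q"
    using aQ by (intro gset_prod_mono) auto
  moreover have "gset_prod op (gset_prod op {a} G {a}) G S \<subseteq> gset_prod op Q G S"
    using aQ QQ gset_prod_mono[of "{a}" Q "{a}" Q op G] by (intro gset_prod_mono) auto
  ultimately show "a \<in> gset_prod op S G Q \<inter> gset_prod op Q G S"
    using absorb_left[OF a x y \<beta> \<gamma> \<delta> rep]
      absorb_right[OF a x \<beta> \<gamma> \<delta> rep v y' \<gamma>' rep_y] by blast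
qed

end

theorem mainTheorem8:
  fixes S :: "'a set" and G :: "'g set" and op :: "'a \<Rightarrow> 'g \<Rightarrow> 'a \<Rightarrow> 'a"
  assumes "gamma_AG2_groupoid S G op"
    and "intra_regular S G op"
    and "Q \<subseteq> S" and "Q \<noteq> {}"
    and "gset_prod op Q G Q \<subseteq> Q"
  shows "gamma_quasi_ideal S G op Q \<longleftrightarrow> gset_prod op S G Q \<inter> gset_prod op Q G S = Q"
proof -
  interpret gamma_AG2 S G op using assms(1) by unfold_locales
  have "Q \<subseteq> gset_prod op S G Q \<inter> gset_prod op Q G S"
    using intra_regular_subset_quasi_product assms(2,3,5) .
  then show ?thesis
    using assms(3-5) unfolding gamma_quasi_ideal_def by blast
qed

end
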